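(* Let $T$ be a continuous Archimedean $t$-norm and $A$ a fuzzy interval in $\mathbb R$. For $n\ge1$ let $A_n=Ave_*(A,\dots,A)$ ($n$ arguments), i.e. $A_n(z)=\sup\{T(A(x_1),\dots,A(x_n)) : \frac1n\sum_{j=1}^n x_j=z\}$. Then $(A_n)_{n\ge1}$ converges levelwise to the crisp fuzzy set $\mathbf 1_{\mathbb M A}$, i.e. for every $\alpha\in(0,1]$, $A_n^\alpha\to\mathbb M A$ in the Hausdorff metric.
   Context: A $t$-norm is a commutative, associative map $T:[0,1]^2\to[0,1]$, non-decreasing in each variable, with neutral element $1$, extended to finitely many arguments by associativity. A continuous $t$-norm is Archimedean if for all $x,y\in(0,1)$ there is $n$ with $T(x,\dots,x)$ ($n$ arguments) $<y$. A fuzzy interval in $\mathbb R$ is a map $A:\mathbb R\to[0,1]$ attaining $1$ whose $\alpha$-cuts $A^\alpha=\{A\ge\alpha\}$, $\alpha\in(0,1]$, are nonempty compact intervals; $\mathbb M A=A^1$. Levelwise convergence means convergence of every $\alpha$-cut, $\alpha\in(0,1]$, in the Hausdorff metric on nonempty compact subsets of $\mathbb R$. *)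

theory Defs
  imports "HOL-Analysis.Analysis"
begin

text \<open>t-norms on [0,1], represented as real functions of two variables;
  only their values on [0,1]^2 matter.\<close>
definition tnorm :: "(real \<Rightarrow> real \<Rightarrow> real) \<Rightarrow> bool" where
  "tnorm T \<longleftrightarrow>
     (\<forall>x\<in>{0..1}. \<forall>y\<in>{0..1}. T x y \<in> {0..1}) \<and>
     (\<forall>x\<in>{0..1}. \<forall>y\<in>{0..1}. T x y = T y x) \<and>
     (\<forall>x\<in>{0..1}. \<forall>y\<in>{0..1}. \<forall>z\<in>{0..1}. T (T x y) z = T x (T y z)) \<and>
     (\<forall>x\<in>{0..1}. \<forall>x'\<in>{0..1}. \<forall>y\<in>{0..1}. x \<le> x' \<longrightarrow> T x y \<le> T x' y) \<and>
     (\<forall>x\<in>{0..1}. T x 1 = x)"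

fun tnorm_n :: "(real \<Rightarrow> real \<Rightarrow> real) \<Rightarrow> nat \<Rightarrow> (nat \<Rightarrow> real) \<Rightarrow> real" where
  "tnorm_n T 0 a = 1"
| "tnorm_n T (Suc n) a = T (tnorm_n T n a) (a n)"

definition continuous_tnorm :: "(real \<Rightarrow> real \<Rightarrow> real) \<Rightarrow> bool" where
  "continuous_tnorm T \<longleftrightarrow> tnorm T \<and>
     continuous_on ({0..1} \<times> {0..1}) (\<lambda>(x, y). T x y)"

definition archimedean_tnorm :: "(real \<Rightarrow> real \<Rightarrow> real) \<Rightarrow> bool" where
  "archimedean_tnorm T \<longleftrightarrow> continuous_tnorm T \<and>
     (\<forall>x\<in>{0<..<1}. \<forall>y\<in>{0<..<1}. \<exists>n. tnorm_n T n (\<lambda>_. x) < y)"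

definition alpha_cut :: "(real \<Rightarrow> real) \<Rightarrow> real \<Rightarrow> real set" where
  "alpha_cut A \<alpha> = {x. A x \<ge> \<alpha>}"

definition fuzzy_interval :: "(real \<Rightarrow> real) \<Rightarrow> bool" where
  "fuzzy_interval A \<longleftrightarrow>
     (\<forall>x. A x \<in> {0..1}) \<and> (\<exists>x. A x = 1) \<and>
     (\<forall>\<alpha>\<in>{0<..1}. alpha_cut A \<alpha> \<noteq> {} \<and> compact (alpha_cut A \<alpha>)
                      \<and> is_interval (alpha_cut A \<alpha>))"

definition core :: "(real \<Rightarrow> real) \<Rightarrow> real set" where
  "core A = alpha_cut A 1"

definition ave_n :: "(real \<Rightarrow> real \<Rightarrow> real) \<Rightarrow> (real \<Rightarrow> real) \<Rightarrow> nat \<Rightarrow> real \<Rightarrow> real" where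
  "ave_n T A n z = Sup {tnorm_n T n (\<lambda>j. A (x j)) | x :: nat \<Rightarrow> real.
                          (\<Sum>j<n. x j) / real n = z}"

definition hausdorff_dist :: "real set \<Rightarrow> real set \<Rightarrow> real" where
  "hausdorff_dist S U = max (SUP x\<in>S. infdist x U) (SUP y\<in>U. infdist y S)"

end

theory Submission
  imports Defs
begin

(* Compactness of the cuts: at a level alpha > 0 only arguments with A(x_j) >= alpha/2
   matter in the supremum defining A_n(z).  The pairs (x_0 + ... + x_(n-1),
   T(y_0,...,y_(n-1))) with alpha/2 <= y_j <= A(x_j) form a compact set (tnorm_sums),
   obtained from the compact truncated hypograph of A by n continuous images.  So the
   supremum is attained, and the alpha-cut of A_n is a continuous image of a compact set.

   Convergence: the core [a,b] lies in every cut of A_n.  If the average of the x_j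
   exceeds b + e while T(A(x_0),...,A(x_(n-1))) >= alpha, all x_j are bounded by the
   alpha-cut of A, so a fixed proportion of them lies beyond b + e/2, where A <= g < 1
   (counting argument).  As T is Archimedean, m arguments equal to g push T below alpha,
   a contradiction for large n.  Reflecting A bounds the cuts from the left, so the cuts
   eventually lie within e of the core, which bounds the Hausdorff distance. *)

lemma tnorm_bounds:
  assumes "tnorm T" "x \<in> {0..1}" "y \<in> {0..1}"
  shows "0 \<le> T x y" "T x y \<le> 1" "T x y \<le> x" "T x y \<le> y"
proof -
  have range: "\<And>x y. x \<in> {0..1} \<Longrightarrow> y \<in> {0..1} \<Longrightarrow> T x y \<in> {0..1}"
   and comm: "\<And>x y. x \<in> {0..1} \<Longrightarrow> y \<in> {0..1} \<Longrightarrow> T x y = T y x"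
   and mono: "\<And>x x' y. x \<in> {0..1} \<Longrightarrow> x' \<in> {0..1} \<Longrightarrow> y \<in> {0..1} \<Longrightarrow> x \<le> x' \<Longrightarrow> T x y \<le> T x' y"
   and unit: "\<And>x. x \<in> {0..1} \<Longrightarrow> T x 1 = x"
    using assms(1) unfolding tnorm_def by auto
  show "0 \<le> T x y" "T x y \<le> 1" using range assms by auto
  have "T x y \<le> T 1 y" using mono[of x 1 y] assms by auto
  also have "\<dots> = y" using comm[of 1 y] unit[of y] assms by auto
  finally show "T x y \<le> y" .
  have "T x y = T y x" using comm assms by auto
  also have "\<dots> \<le> T 1 x" using mono[of y 1 x] assms by auto
  also have "\<dots> = x" using comm[of 1 x] unit[of x] assms by auto
  finally show "T x y \<le> x" .
qed

lemma tnorm_mono: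
  assumes "tnorm T" "x \<in> {0..1}" "y \<in> {0..1}" "x' \<in> {0..1}" "y' \<in> {0..1}" "x \<le> x'" "y \<le> y'"
  shows "T x y \<le> T x' y'"
proof -
  have comm: "\<And>x y. x \<in> {0..1} \<Longrightarrow> y \<in> {0..1} \<Longrightarrow> T x y = T y x"
   and mono: "\<And>x x' y. x \<in> {0..1} \<Longrightarrow> x' \<in> {0..1} \<Longrightarrow> y \<in> {0..1} \<Longrightarrow> x \<le> x' \<Longrightarrow> T x y \<le> T x' y"
    using assms(1) unfolding tnorm_def by auto
  have "T x y \<le> T x' y" using mono assms by auto
  also have "\<dots> = T y x'" using comm assms by auto
  also have "\<dots> \<le> T y' x'" using mono assms by auto
  also have "\<dots> = T x' y'" using comm assms by auto
  finally show ?thesis .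
qed

lemma tnorm_n_range:
  assumes "tnorm T" "\<forall>j<n. a j \<in> {0..1}"
  shows "tnorm_n T n a \<in> {0..1}"
  using assms(2)
proof (induction n)
  case 0 then show ?case by simp
next
  case (Suc n)
  then have "tnorm_n T n a \<in> {0..1}" "a n \<in> {0..1}" by auto
  then show ?case using tnorm_bounds[OF assms(1)] by auto
qed

lemma tnorm_n_le_arg:
  assumes "tnorm T" "\<forall>j<n. a j \<in> {0..1}" "j < n"
  shows "tnorm_n T n a \<le> a j"
  using assms(2,3)
proof (induction n)
  case 0 then show ?case by simp
next
  case (Suc n)
  then have args: "tnorm_n T n a \<in> {0..1}" "a n \<in> {0..1}" using tnorm_n_range[OF assms(1)] by auto
  show ?case
  proof (cases "j = n")
    case True then show ?thesis using tnorm_bounds[OF assms(1) args] by simp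
  next
    case False
    then have "tnorm_n T n a \<le> a j" using Suc by auto
    then show ?thesis using tnorm_bounds[OF assms(1) args] by simp
  qed
qed

lemma tnorm_n_mono:
  assumes "tnorm T" "\<forall>j<n. a j \<in> {0..1}" "\<forall>j<n. b j \<in> {0..1}" "\<forall>j<n. a j \<le> b j"
  shows "tnorm_n T n a \<le> tnorm_n T n b"
  using assms(2-4)
proof (induction n)
  case 0 then show ?case by simp
next
  case (Suc n)
  then have "tnorm_n T n a \<le> tnorm_n T n b" by auto
  moreover have "tnorm_n T n a \<in> {0..1}" "tnorm_n T n b \<in> {0..1}"
    using tnorm_n_range[OF assms(1)] Suc.prems by auto
  ultimately show ?case using tnorm_mono[OF assms(1)] Suc.prems by simp
qed

lemma tnorm_n_cong: "\<forall>j<n. a j = b j \<Longrightarrow> tnorm_n T n a = tnorm_n T n b"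
  by (induction n) auto

lemma tnorm_n_const_one:
  assumes "tnorm T"
  shows "tnorm_n T n (\<lambda>_. 1) = 1"
proof -
  have "T 1 1 = 1" using assms unfolding tnorm_def by auto
  then show ?thesis by (induction n) auto
qed

lemma tnorm_n_const_antimono:
  assumes "tnorm T" "g \<in> {0..1}" "m \<le> k"
  shows "tnorm_n T k (\<lambda>_. g) \<le> tnorm_n T m (\<lambda>_. g)"
  using assms(3)
proof (induction k)
  case 0 then show ?case by simp
next
  case (Suc k)
  have range: "tnorm_n T k (\<lambda>_. g) \<in> {0..1}" using tnorm_n_range[OF assms(1)] assms(2) by auto
  show ?case
  proof (cases "m = Suc k")
    case True then show ?thesis by simp
  next
    case False
    then have "tnorm_n T k (\<lambda>_. g) \<le> tnorm_n T m (\<lambda>_. g)" using Suc by auto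
    then show ?thesis using tnorm_bounds[OF assms(1) range assms(2)] by simp
  qed
qed

text \<open>If k of the arguments are at most g, then T of all arguments is at most
  the k-th power of g: the other arguments can only decrease the value.\<close>

lemma tnorm_n_le_power_count:
  assumes "tnorm T" "\<forall>j<n. a j \<in> {0..1}" "g \<in> {0..1}"
  shows "tnorm_n T n a \<le> tnorm_n T (card {j. j < n \<and> a j \<le> g}) (\<lambda>_. g)"
  using assms(2)
proof (induction n)
  case 0 then show ?case by simp
next
  case (Suc n)
  let ?K = "{j. j < n \<and> a j \<le> g}"
  have IH: "tnorm_n T n a \<le> tnorm_n T (card ?K) (\<lambda>_. g)" using Suc by auto
  have args: "tnorm_n T n a \<in> {0..1}" "a n \<in> {0..1}"
    using tnorm_n_range[OF assms(1)] Suc.prems by auto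
  have power: "tnorm_n T (card ?K) (\<lambda>_. g) \<in> {0..1}" using tnorm_n_range[OF assms(1)] assms(3) by auto
  show ?case
  proof (cases "a n \<le> g")
    case True
    have "{j. j < Suc n \<and> a j \<le> g} = insert n ?K" using True by auto
    then have card: "card {j. j < Suc n \<and> a j \<le> g} = Suc (card ?K)" by simp
    have "tnorm_n T (Suc n) a = T (tnorm_n T n a) (a n)" by simp
    also have "\<dots> \<le> T (tnorm_n T (card ?K) (\<lambda>_. g)) g"
      using tnorm_mono[OF assms(1) args power assms(3) IH True] .
    finally show ?thesis using card by simp
  next
    case False
    have "{j. j < Suc n \<and> a j \<le> g} = ?K" using False less_Suc_eq by auto
    moreover have "tnorm_n T (Suc n) a \<le> tnorm_n T n a" using tnorm_bounds[OF assms(1) args] by simp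
    ultimately show ?thesis using IH by simp
  qed
qed

lemma archimedean_power_below:
  assumes "archimedean_tnorm T" "g \<in> {0..<1}" "\<alpha> \<in> {0<..1}"
  shows "\<exists>m. tnorm_n T m (\<lambda>_. g) < \<alpha>"
proof (cases "g < \<alpha>")
  case True
  have comm: "\<And>x y. x \<in> {0..1} \<Longrightarrow> y \<in> {0..1} \<Longrightarrow> T x y = T y x"
    and unit: "\<And>x. x \<in> {0..1} \<Longrightarrow> T x 1 = x"
    using assms(1) unfolding archimedean_tnorm_def continuous_tnorm_def tnorm_def by auto
  have g: "g \<in> {0..1}" using assms(2) by auto
  have "tnorm_n T (Suc 0) (\<lambda>_. g) = T g 1" using comm[of 1 g] g by simp
  also have "\<dots> = g" using unit[of g] g by simp
  finally show ?thesis using True by metis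
next
  case False
  then have "g \<in> {0<..<1}" "\<alpha> \<in> {0<..<1}" using assms by auto
  then show ?thesis using assms(1) unfolding archimedean_tnorm_def by blast
qed

lemma fuzzy_interval_quasiconcave:
  assumes "fuzzy_interval A" "u \<le> v" "v \<le> w"
  shows "min (A u) (A w) \<le> A v"
proof (cases "min (A u) (A w) \<le> 0")
  case True
  have "0 \<le> A v" using assms(1) unfolding fuzzy_interval_def by auto
  then show ?thesis using True by linarith
next
  case False
  let ?\<beta> = "min (A u) (A w)"
  have "?\<beta> \<in> {0<..1}" using False assms(1) unfolding fuzzy_interval_def by (auto simp: min_def)
  then have "is_interval (alpha_cut A ?\<beta>)" using assms(1) unfolding fuzzy_interval_def by auto
  moreover have "u \<in> alpha_cut A ?\<beta>" "w \<in> alpha_cut A ?\<beta>" unfolding alpha_cut_def by auto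
  ultimately have "v \<in> alpha_cut A ?\<beta>" using mem_is_interval_1_I assms(2,3) by blast
  then show ?thesis unfolding alpha_cut_def by auto
qed

text \<open>The hypograph of A, cut off at height 1, is the intersection of the closed
  sets "y \<le> \<beta> or x in the \<beta>-cut", so it is closed (A is upper semicontinuous).\<close>

lemma fuzzy_interval_hypograph_closed:
  assumes "fuzzy_interval A"
  shows "closed {p. snd p \<le> 1 \<and> snd p \<le> A (fst p)}"
proof -
  have eq: "{p. snd p \<le> 1 \<and> snd p \<le> A (fst p)} =
          UNIV \<times> {..1} \<inter> (\<Inter>\<beta>\<in>{0<..1}. UNIV \<times> {..\<beta>} \<union> alpha_cut A \<beta> \<times> UNIV)"
  proof (intro set_eqI iffI)
    fix p :: "real \<times> real"
    assume "p \<in> {p. snd p \<le> 1 \<and> snd p \<le> A (fst p)}"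
    then show "p \<in> UNIV \<times> {..1} \<inter> (\<Inter>\<beta>\<in>{0<..1}. UNIV \<times> {..\<beta>} \<union> alpha_cut A \<beta> \<times> UNIV)"
      by (cases p) (auto simp: alpha_cut_def)
  next
    fix p :: "real \<times> real"
    assume p: "p \<in> UNIV \<times> {..1} \<inter> (\<Inter>\<beta>\<in>{0<..1}. UNIV \<times> {..\<beta>} \<union> alpha_cut A \<beta> \<times> UNIV)"
    obtain x y where xy: "p = (x, y)" by (cases p)
    have "y \<le> A x"
    proof (rule ccontr)
      assume below: "\<not> y \<le> A x"
      define \<beta> where "\<beta> = (A x + y) / 2"
      have "0 \<le> A x" "y \<le> 1" using assms p xy unfolding fuzzy_interval_def by auto
      then have "\<beta> \<in> {0<..1}" using below unfolding \<beta>_def by auto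
      then have "y \<le> \<beta> \<or> \<beta> \<le> A x" using p xy unfolding alpha_cut_def by blast
      then show False using below unfolding \<beta>_def by auto
    qed
    then show "p \<in> {p. snd p \<le> 1 \<and> snd p \<le> A (fst p)}" using p xy by auto
  qed
  have "closed (alpha_cut A \<beta>)" if "\<beta> \<in> {0<..1}" for \<beta>
    using assms that compact_imp_closed unfolding fuzzy_interval_def by blast
  then show ?thesis unfolding eq
    by (intro closed_Int closed_INT ballI closed_Un closed_Times closed_UNIV closed_atMost) auto
qed

text \<open>The part of the hypograph at heights in [\<beta>,1], for \<beta> > 0.  The sup
  defining A_n only involves points of this set.\<close>

definition upper_hypograph :: "(real \<Rightarrow> real) \<Rightarrow> real \<Rightarrow> (real \<times> real) set" where
  "upper_hypograph A \<beta> = {p. \<beta> \<le> snd p \<and> snd p \<le> 1 \<and> snd p \<le> A (fst p)}"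

lemma upper_hypograph_compact:
  assumes "fuzzy_interval A" "\<beta> \<in> {0<..1}"
  shows "compact (upper_hypograph A \<beta>)"
proof -
  have cut: "compact (alpha_cut A \<beta>)" using assms unfolding fuzzy_interval_def by auto
  have "upper_hypograph A \<beta> =
      (alpha_cut A \<beta> \<times> {\<beta>..1}) \<inter> {p. snd p \<le> 1 \<and> snd p \<le> A (fst p)}"
    unfolding upper_hypograph_def alpha_cut_def by auto
  then show ?thesis
    using compact_Int_closed[OF compact_Times[OF cut compact_Icc] fuzzy_interval_hypograph_closed[OF assms(1)]]
    by simp
qed

lemma fuzzy_interval_core_nonempty:
  assumes "fuzzy_interval A"
  shows "core A \<noteq> {}"
proof -
  have "(1::real) \<in> {0<..1}" by simp
  then show ?thesis using assms unfolding fuzzy_interval_def core_def by blast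
qed

lemma fuzzy_interval_core:
  assumes "fuzzy_interval A"
  obtains a b where "core A = {a..b}" "a \<le> b" "\<And>z. z \<in> core A \<longleftrightarrow> A z = 1"
proof -
  have "(1::real) \<in> {0<..1}" by auto
  then have core: "core A \<noteq> {}" "compact (core A)" "is_interval (core A)"
    using assms unfolding fuzzy_interval_def core_def by auto
  obtain a where a: "a \<in> core A" "\<forall>y\<in>core A. a \<le> y" using compact_attains_inf[OF core(2,1)] by blast
  obtain b where b: "b \<in> core A" "\<forall>y\<in>core A. y \<le> b" using compact_attains_sup[OF core(2,1)] by blast
  have eq: "core A = {a..b}"
  proof
    show "core A \<subseteq> {a..b}" using a(2) b(2) by auto
    show "{a..b} \<subseteq> core A" using mem_is_interval_1_I[OF core(3) a(1) b(1)] by auto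
  qed
  have iff: "z \<in> core A \<longleftrightarrow> A z = 1" for z
  proof -
    have "A z \<le> 1" using assms unfolding fuzzy_interval_def by auto
    then show ?thesis unfolding core_def alpha_cut_def by auto
  qed
  show ?thesis using that[OF eq _ iff] a(2) b(1) by blast
qed

text \<open>The pairs (x_0 + \<dots> + x_(n-1), T(y_0,\<dots>,y_(n-1))) with all (x_j,y_j) in H,
  built up one summand at a time.  For H a truncated hypograph of A these pairs
  encode the candidates in the supremum defining A_n.\<close>

fun tnorm_sums :: "(real \<Rightarrow> real \<Rightarrow> real) \<Rightarrow> (real \<times> real) set \<Rightarrow> nat \<Rightarrow> (real \<times> real) set" where
  "tnorm_sums T H 0 = {(0, 1)}"
| "tnorm_sums T H (Suc n) =
     (\<lambda>p. (fst (fst p) + fst (snd p), T (snd (fst p)) (snd (snd p)))) ` (tnorm_sums T H n \<times> H)"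

lemma mem_tnorm_sums:
  "p \<in> tnorm_sums T H n \<longleftrightarrow>
     (\<exists>x y. (\<forall>j<n. (x j, y j) \<in> H) \<and> fst p = (\<Sum>j<n. x j) \<and> snd p = tnorm_n T n y)"
proof (induction n arbitrary: p)
  case 0 then show ?case by (cases p) auto
next
  case (Suc n)
  show ?case
  proof
    assume "p \<in> tnorm_sums T H (Suc n)"
    then obtain q h where q: "q \<in> tnorm_sums T H n" "h \<in> H"
      and p: "p = (fst q + fst h, T (snd q) (snd h))" by auto
    from q(1) Suc obtain x y where
      xy: "\<forall>j<n. (x j, y j) \<in> H" "fst q = (\<Sum>j<n. x j)" "snd q = tnorm_n T n y" by blast
    let ?x = "x(n := fst h)" and ?y = "y(n := snd h)"
    have "\<forall>j<Suc n. (?x j, ?y j) \<in> H" using xy(1) q(2) by (auto simp: less_Suc_eq)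
    moreover have "fst p = (\<Sum>j<Suc n. ?x j)" using xy(2) p by simp
    moreover have "tnorm_n T n ?y = tnorm_n T n y" by (rule tnorm_n_cong) auto
    then have "snd p = tnorm_n T (Suc n) ?y" using xy(3) p by simp
    ultimately show "\<exists>x y. (\<forall>j<Suc n. (x j, y j) \<in> H) \<and> fst p = (\<Sum>j<Suc n. x j) \<and>
                       snd p = tnorm_n T (Suc n) y" by blast
  next
    assume "\<exists>x y. (\<forall>j<Suc n. (x j, y j) \<in> H) \<and> fst p = (\<Sum>j<Suc n. x j) \<and>
              snd p = tnorm_n T (Suc n) y"
    then obtain x y where xy: "\<forall>j<Suc n. (x j, y j) \<in> H" "fst p = (\<Sum>j<Suc n. x j)"
      "snd p = tnorm_n T (Suc n) y" by blast
    let ?q = "((\<Sum>j<n. x j), tnorm_n T n y)"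
    have "?q \<in> tnorm_sums T H n" unfolding Suc.IH
      by (rule exI[of _ x], rule exI[of _ y]) (use xy(1) in auto)
    moreover have "(x n, y n) \<in> H" using xy(1) by auto
    moreover have "p = (fst ?q + fst (x n, y n), T (snd ?q) (snd (x n, y n)))" using xy by (cases p) auto
    ultimately show "p \<in> tnorm_sums T H (Suc n)"
      unfolding tnorm_sums.simps by (intro image_eqI[where x="(?q, (x n, y n))"]) auto
  qed
qed

text \<open>For a continuous t-norm and compact H at heights in [0,1], each step is a
  continuous image of a compact product, so all these sets are compact.\<close>

lemma compact_tnorm_sums:
  assumes "continuous_tnorm T" "compact H" "H \<subseteq> UNIV \<times> {0..1}"
  shows "compact (tnorm_sums T H n) \<and> tnorm_sums T H n \<subseteq> UNIV \<times> {0..1}"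
proof (induction n)
  case 0 then show ?case by auto
next
  case (Suc n)
  have t: "tnorm T" and cont: "continuous_on ({0..1} \<times> {0..1}) (\<lambda>(x, y). T x y)"
    using assms(1) unfolding continuous_tnorm_def by auto
  let ?S = "tnorm_sums T H n \<times> H"
  have S: "compact ?S" using Suc assms(2) compact_Times by blast
  have heights: "(\<lambda>p. (snd (fst p), snd (snd p))) ` ?S \<subseteq> {0..1} \<times> {0..1}"
    using Suc assms(3) by auto
  have "continuous_on ?S (\<lambda>p. (\<lambda>(x, y). T x y) (snd (fst p), snd (snd p)))"
    by (rule continuous_on_compose2[OF cont _ heights]) (intro continuous_intros)
  then have "continuous_on ?S (\<lambda>p. (fst (fst p) + fst (snd p), T (snd (fst p)) (snd (snd p))))"
    by (intro continuous_on_Pair) (auto intro!: continuous_intros)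
  then have "compact (tnorm_sums T H (Suc n))"
    using compact_continuous_image[OF _ S] by simp
  moreover have "tnorm_sums T H (Suc n) \<subseteq> UNIV \<times> {0..1}"
  proof
    fix p assume "p \<in> tnorm_sums T H (Suc n)"
    then obtain q h where q: "q \<in> tnorm_sums T H n" "h \<in> H"
      and p: "p = (fst q + fst h, T (snd q) (snd h))" by auto
    have "snd q \<in> {0..1}" "snd h \<in> {0..1}" using q Suc assms(3) by auto
    then show "p \<in> UNIV \<times> {0..1}" using p tnorm_bounds[OF t] by auto
  qed
  ultimately show ?case by blast
qed

definition ave_values :: "(real \<Rightarrow> real \<Rightarrow> real) \<Rightarrow> (real \<Rightarrow> real) \<Rightarrow> nat \<Rightarrow> real \<Rightarrow> real set" where
  "ave_values T A n z = {tnorm_n T n (\<lambda>j. A (x j)) | x :: nat \<Rightarrow> real. (\<Sum>j<n. x j) / real n = z}"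

lemma ave_n_eq_Sup: "ave_n T A n z = Sup (ave_values T A n z)"
  unfolding ave_n_def ave_values_def ..

lemma ave_values_nonempty_bdd:
  assumes "tnorm T" "fuzzy_interval A" "n \<ge> 1"
  shows "ave_values T A n z \<noteq> {}" "bdd_above (ave_values T A n z)"
proof -
  have "(\<Sum>j<n. (\<lambda>_. z) j) / real n = z" using assms(3) by simp
  then show "ave_values T A n z \<noteq> {}" unfolding ave_values_def by blast
  have A01: "\<forall>j<n. A (x j) \<in> {0..1}" for x using assms(2) unfolding fuzzy_interval_def by auto
  show "bdd_above (ave_values T A n z)"
    unfolding bdd_above_def ave_values_def using tnorm_n_range[OF assms(1) A01]
    by (intro exI[of _ 1]) auto
qed

lemma tnorm_sums_le_ave_n:
  assumes t: "tnorm T" and fi: "fuzzy_interval A" and n: "n \<ge> 1" and \<beta>: "0 \<le> \<beta>"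
    and p: "p \<in> tnorm_sums T (upper_hypograph A \<beta>) n" "fst p = real n * z"
  shows "snd p \<le> ave_n T A n z"
proof -
  obtain x y where xy: "\<forall>j<n. (x j, y j) \<in> upper_hypograph A \<beta>"
      "fst p = (\<Sum>j<n. x j)" "snd p = tnorm_n T n y"
    using p(1) unfolding mem_tnorm_sums by blast
  have A01: "\<And>r. A r \<in> {0..1}" using fi unfolding fuzzy_interval_def by auto
  have "tnorm_n T n y \<le> tnorm_n T n (\<lambda>j. A (x j))"
    using xy(1) \<beta> A01 unfolding upper_hypograph_def by (intro tnorm_n_mono[OF t]) auto
  moreover have "real n \<noteq> 0" using n by auto
  then have "(\<Sum>j<n. x j) / real n = z" using xy(2) p(2) by (simp add: field_simps)
  then have "tnorm_n T n (\<lambda>j. A (x j)) \<in> ave_values T A n z" unfolding ave_values_def by blast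
  ultimately show ?thesis
    unfolding ave_n_eq_Sup xy(3)
    using cSup_upper[OF _ ave_values_nonempty_bdd(2)[OF t fi n]] by fastforce
qed

text \<open>Conversely, at a level \<alpha> > 0 the supremum defining A_n is attained:
  only candidates above \<alpha>/2 matter, and these form the compact set
  tnorm_sums T (upper_hypograph A (\<alpha>/2)) n.\<close>

lemma ave_n_attained:
  assumes ct: "continuous_tnorm T" and fi: "fuzzy_interval A" and \<alpha>: "\<alpha> \<in> {0<..1}" and n: "n \<ge> 1"
    and above: "\<alpha> \<le> ave_n T A n z"
  shows "\<exists>p\<in>tnorm_sums T (upper_hypograph A (\<alpha>/2)) n. fst p = real n * z \<and> \<alpha> \<le> snd p"
proof -
  let ?H = "upper_hypograph A (\<alpha>/2)"
  let ?V = "snd ` (tnorm_sums T ?H n \<inter> {p. fst p = real n * z})"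
  have t: "tnorm T" using ct unfolding continuous_tnorm_def by auto
  have A01: "\<And>r. A r \<in> {0..1}" using fi unfolding fuzzy_interval_def by auto
  have nz: "real n \<noteq> 0" using n by auto
  have ne: "ave_values T A n z \<noteq> {}" using ave_values_nonempty_bdd[OF t fi n] by auto
  have "compact ?H" using upper_hypograph_compact[OF fi] \<alpha> by auto
  moreover have "?H \<subseteq> UNIV \<times> {0..1}" using \<alpha> unfolding upper_hypograph_def by auto
  ultimately have "compact (tnorm_sums T ?H n)" using compact_tnorm_sums[OF ct] by blast
  moreover have "closed {p :: real \<times> real. fst p = real n * z}"
    by (intro closed_Collect_eq continuous_intros)
  ultimately have G: "compact (tnorm_sums T ?H n \<inter> {p. fst p = real n * z})"
    using compact_Int_closed by blast
  have "continuous_on (tnorm_sums T ?H n \<inter> {p. fst p = real n * z}) snd"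
    by (intro continuous_intros)
  then have V: "compact ?V" using compact_continuous_image[OF _ G] by blast
  have large_values: "v \<in> ?V" if v: "v \<in> ave_values T A n z" and large: "\<alpha>/2 \<le> v" for v
  proof -
    obtain x where x: "v = tnorm_n T n (\<lambda>j. A (x j))" "(\<Sum>j<n. x j) / real n = z"
      using v unfolding ave_values_def by blast
    have "\<forall>j<n. (x j, A (x j)) \<in> ?H"
    proof (intro allI impI)
      fix j assume "j < n"
      then have "v \<le> A (x j)" using tnorm_n_le_arg[OF t _ \<open>j < n\<close>, of "\<lambda>j. A (x j)"] A01 x(1) by auto
      then show "(x j, A (x j)) \<in> ?H" using large A01[of "x j"] unfolding upper_hypograph_def by auto
    qed
    then have "((\<Sum>j<n. x j), v) \<in> tnorm_sums T ?H n" unfolding mem_tnorm_sums using x(1)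
      by (intro exI[of _ x] exI[of _ "\<lambda>j. A (x j)"]) auto
    moreover have "(\<Sum>j<n. x j) = real n * z" using x(2) nz by (simp add: field_simps)
    ultimately show ?thesis by force
  qed
  have "?V \<noteq> {}"
  proof
    assume empty: "?V = {}"
    have "Sup (ave_values T A n z) \<le> \<alpha>/2"
    proof (rule cSup_least[OF ne])
      fix v assume "v \<in> ave_values T A n z"
      then show "v \<le> \<alpha>/2" using large_values[of v] empty by force
    qed
    then show False using above \<alpha> unfolding ave_n_eq_Sup by auto
  qed
  then obtain w where w: "w \<in> ?V" "\<forall>v\<in>?V. v \<le> w" using compact_attains_sup[OF V] by blast
  have "Sup (ave_values T A n z) \<le> max (\<alpha>/2) w"
  proof (rule cSup_least[OF ne])
    fix v assume v: "v \<in> ave_values T A n z"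
    show "v \<le> max (\<alpha>/2) w"
    proof (cases "\<alpha>/2 \<le> v")
      case True
      then have "v \<le> w" using w(2) large_values[OF v] by blast
      then show ?thesis by simp
    qed simp
  qed
  then have "\<alpha> \<le> w" using above \<alpha> unfolding ave_n_eq_Sup by auto
  then show ?thesis using w(1) by auto
qed

text \<open>The \<alpha>-cut of A_n is therefore the image of a compact set under p \<mapsto> fst p / n.\<close>

lemma alpha_cut_ave_n_eq:
  assumes ct: "continuous_tnorm T" and fi: "fuzzy_interval A" and \<alpha>: "\<alpha> \<in> {0<..1}" and n: "n \<ge> 1"
  shows "alpha_cut (ave_n T A n) \<alpha> =
           (\<lambda>p. fst p / real n) ` (tnorm_sums T (upper_hypograph A (\<alpha>/2)) n \<inter> {p. \<alpha> \<le> snd p})"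
proof (intro set_eqI iffI)
  fix z assume "z \<in> alpha_cut (ave_n T A n) \<alpha>"
  then obtain p where p: "p \<in> tnorm_sums T (upper_hypograph A (\<alpha>/2)) n" "fst p = real n * z" "\<alpha> \<le> snd p"
    using ave_n_attained[OF ct fi \<alpha> n] unfolding alpha_cut_def by blast
  then show "z \<in> (\<lambda>p. fst p / real n) ` (tnorm_sums T (upper_hypograph A (\<alpha>/2)) n \<inter> {p. \<alpha> \<le> snd p})"
    using n by (intro image_eqI[where x=p]) auto
next
  fix z assume "z \<in> (\<lambda>p. fst p / real n) ` (tnorm_sums T (upper_hypograph A (\<alpha>/2)) n \<inter> {p. \<alpha> \<le> snd p})"
  then obtain p where p: "p \<in> tnorm_sums T (upper_hypograph A (\<alpha>/2)) n" "\<alpha> \<le> snd p" "z = fst p / real n"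
    by auto
  have t: "tnorm T" using ct unfolding continuous_tnorm_def by auto
  have "fst p = real n * z" using p(3) n by auto
  then have "snd p \<le> ave_n T A n z" using tnorm_sums_le_ave_n[OF t fi n _ p(1)] \<alpha> by auto
  then show "z \<in> alpha_cut (ave_n T A n) \<alpha>" using p(2) unfolding alpha_cut_def by auto
qed

lemma compact_alpha_cut_ave_n:
  assumes ct: "continuous_tnorm T" and fi: "fuzzy_interval A" and \<alpha>: "\<alpha> \<in> {0<..1}" and n: "n \<ge> 1"
  shows "compact (alpha_cut (ave_n T A n) \<alpha>)"
proof -
  let ?H = "upper_hypograph A (\<alpha>/2)"
  have "compact ?H" using upper_hypograph_compact[OF fi] \<alpha> by auto
  moreover have "?H \<subseteq> UNIV \<times> {0..1}" using \<alpha> unfolding upper_hypograph_def by auto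
  ultimately have "compact (tnorm_sums T ?H n)" using compact_tnorm_sums[OF ct] by blast
  moreover have "closed {p :: real \<times> real. \<alpha> \<le> snd p}" by (intro closed_Collect_le continuous_intros)
  ultimately have "compact (tnorm_sums T ?H n \<inter> {p. \<alpha> \<le> snd p})"
    using compact_Int_closed by blast
  then show ?thesis unfolding alpha_cut_ave_n_eq[OF ct fi \<alpha> n]
    by (rule compact_continuous_image[rotated]) (use n in \<open>auto intro!: continuous_intros\<close>)
qed

lemma alpha_cut_ave_n_witness:
  assumes ct: "continuous_tnorm T" and fi: "fuzzy_interval A" and \<alpha>: "\<alpha> \<in> {0<..1}" and n: "n \<ge> 1"
    and z: "z \<in> alpha_cut (ave_n T A n) \<alpha>"
  shows "\<exists>x. (\<Sum>j<n. x j) = real n * z \<and> \<alpha> \<le> tnorm_n T n (\<lambda>j. A (x j))"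
proof -
  have t: "tnorm T" using ct unfolding continuous_tnorm_def by auto
  have A01: "\<And>r. A r \<in> {0..1}" using fi unfolding fuzzy_interval_def by auto
  obtain p where p: "p \<in> tnorm_sums T (upper_hypograph A (\<alpha>/2)) n" "fst p = real n * z" "\<alpha> \<le> snd p"
    using ave_n_attained[OF ct fi \<alpha> n] z unfolding alpha_cut_def by blast
  then obtain x y where xy: "\<forall>j<n. (x j, y j) \<in> upper_hypograph A (\<alpha>/2)"
      "fst p = (\<Sum>j<n. x j)" "snd p = tnorm_n T n y"
    unfolding mem_tnorm_sums by blast
  have "tnorm_n T n y \<le> tnorm_n T n (\<lambda>j. A (x j))"
    using xy(1) \<alpha> A01 unfolding upper_hypograph_def by (intro tnorm_n_mono[OF t]) auto
  then show ?thesis using xy p by (intro exI[of _ x]) auto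
qed

text \<open>Taking all arguments equal to a point of the core shows that the core lies
  in every cut of A_n.\<close>

lemma core_subset_alpha_cut_ave_n:
  assumes t: "tnorm T" and fi: "fuzzy_interval A" and \<alpha>: "\<alpha> \<in> {0<..1}" and n: "n \<ge> 1"
  shows "core A \<subseteq> alpha_cut (ave_n T A n) \<alpha>"
proof
  fix z assume "z \<in> core A"
  moreover have "A z \<le> 1" using fi unfolding fuzzy_interval_def by auto
  ultimately have "A z = 1" unfolding core_def alpha_cut_def by auto
  have "(\<Sum>j<n. (\<lambda>_. z) j) / real n = z" using n by simp
  then have "tnorm_n T n (\<lambda>_. A z) \<in> ave_values T A n z"
    unfolding ave_values_def by (intro CollectI exI[of _ "\<lambda>_. z"]) simp
  moreover have "tnorm_n T n (\<lambda>_. A z) = 1" using \<open>A z = 1\<close> tnorm_n_const_one[OF t] by simp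
  ultimately have "1 \<le> ave_n T A n z"
    unfolding ave_n_eq_Sup using cSup_upper[OF _ ave_values_nonempty_bdd(2)[OF t fi n]] by fastforce
  then show "z \<in> alpha_cut (ave_n T A n) \<alpha>" using \<alpha> unfolding alpha_cut_def by auto
qed

text \<open>Counting argument: if x_0,\<dots>,x_(n-1) are bounded by R and their average is
  at least d, then the terms exceeding c, each contributing at most R - c above c,
  must make up the surplus n (d - c).\<close>

lemma count_terms_above:
  fixes x :: "nat \<Rightarrow> real"
  assumes "\<forall>j<n. x j \<le> R" "real n * d \<le> (\<Sum>j<n. x j)"
  shows "real n * (d - c) \<le> real (card {j\<in>{..<n}. c < x j}) * (R - c)"
proof -
  have "(\<Sum>j<n. x j) \<le> (\<Sum>j<n. c + (if c < x j then R - c else 0))"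
    by (rule sum_mono) (use assms(1) in auto)
  also have "\<dots> = real n * c + (\<Sum>j<n. if c < x j then R - c else 0)"
    by (simp add: sum.distrib)
  also have "(\<Sum>j<n. if c < x j then R - c else 0) = real (card {j\<in>{..<n}. c < x j}) * (R - c)"
    by (simp add: sum.inter_filter[symmetric])
  finally have "real n * d \<le> real n * c + real (card {j\<in>{..<n}. c < x j}) * (R - c)"
    using assms(2) by linarith
  then show ?thesis by (simp add: algebra_simps)
qed

text \<open>Let A be nonincreasing beyond c with A(c) < 1 and let its
  \<alpha>-cut be bounded by R.  Then for large n, every x whose average is at least d > c
  has T(A(x_0),\<dots>,A(x_(n-1))) < \<alpha>: otherwise all x_j \<le> R, so by counting a
  proportion (d - c)/(|R - c| + 1) of the arguments lie beyond c, i.e. are at most A(c),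
  and already m such arguments push T below \<alpha> by the Archimedean property.\<close>

lemma tnorm_n_right_tail:
  assumes arch: "archimedean_tnorm T" and A01: "\<And>x. A x \<in> {0..1}"
    and mono: "\<And>x y. c \<le> y \<Longrightarrow> y \<le> x \<Longrightarrow> A x \<le> A y"
    and below_one: "A c < 1" and cd: "c < d" and \<alpha>: "\<alpha> \<in> {0<..1}"
    and bounded: "\<And>x. \<alpha> \<le> A x \<Longrightarrow> x \<le> R"
  shows "\<exists>N. \<forall>n\<ge>N. \<forall>x. real n * d \<le> (\<Sum>j<n. x j) \<longrightarrow> tnorm_n T n (\<lambda>j. A (x j)) < \<alpha>"
proof -
  have t: "tnorm T" using arch unfolding archimedean_tnorm_def continuous_tnorm_def by auto
  define g where "g = A c"
  have g: "g \<in> {0..<1}" using below_one A01[of c] unfolding g_def by auto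
  obtain m where m: "tnorm_n T m (\<lambda>_. g) < \<alpha>" using archimedean_power_below[OF arch g \<alpha>] by blast
  define D where "D = \<bar>R - c\<bar> + 1"
  have D: "D > 0" unfolding D_def by auto
  define N where "N = nat \<lceil>real m * D / (d - c)\<rceil>"
  have N: "real m * D / (d - c) \<le> real N" unfolding N_def by linarith
  show ?thesis
  proof (intro exI[of _ N] allI impI)
    fix n x assume nN: "N \<le> n" and average: "real n * d \<le> (\<Sum>j<n. x j)"
    show "tnorm_n T n (\<lambda>j. A (x j)) < \<alpha>"
    proof (rule ccontr)
      assume "\<not> tnorm_n T n (\<lambda>j. A (x j)) < \<alpha>"
      then have large: "\<alpha> \<le> tnorm_n T n (\<lambda>j. A (x j))" by simp
      have Ax: "\<forall>j<n. A (x j) \<in> {0..1}" using A01 by auto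
      have "\<forall>j<n. x j \<le> R" using large tnorm_n_le_arg[OF t Ax] bounded by force
      define K where "K = {j\<in>{..<n}. c < x j}"
      have "real n * (d - c) \<le> real (card K) * (R - c)"
        unfolding K_def using count_terms_above[OF \<open>\<forall>j<n. x j \<le> R\<close> average] .
      also have "\<dots> \<le> real (card K) * D" unfolding D_def by (intro mult_left_mono) auto
      finally have many: "real n * (d - c) \<le> real (card K) * D" .
      have "real m * D / (d - c) \<le> real n" using N nN by linarith
      then have enough: "real m * D \<le> real n * (d - c)" using cd by (simp add: field_simps)
      have "m \<le> card K"
      proof (rule ccontr)
        assume "\<not> m \<le> card K"
        then have "(real (card K) + 1) * D \<le> real m * D" using D by (intro mult_right_mono) auto
        then show False using many enough D by (simp add: algebra_simps)
      qed
      moreover have "K \<subseteq> {j. j < n \<and> A (x j) \<le> g}"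
        unfolding K_def g_def by (auto intro: mono)
      then have "card K \<le> card {j. j < n \<and> A (x j) \<le> g}" by (intro card_mono) auto
      ultimately have "tnorm_n T (card {j. j < n \<and> A (x j) \<le> g}) (\<lambda>_. g) \<le> tnorm_n T m (\<lambda>_. g)"
        using tnorm_n_const_antimono[OF t] g by auto
      then show False using tnorm_n_le_power_count[OF t Ax, of g] g m large by auto
    qed
  qed
qed

text \<open>Applying the tail estimate to A and to its reflection x \<mapsto> A(-x): for every
  e > 0, eventually all points of the \<alpha>-cut of A_n lie within distance e of the
  core [a,b].\<close>

lemma alpha_cut_ave_n_near_core:
  assumes arch: "archimedean_tnorm T" and fi: "fuzzy_interval A" and \<alpha>: "\<alpha> \<in> {0<..1}" and e: "e > 0"
  shows "eventually (\<lambda>n. \<forall>z\<in>alpha_cut (ave_n T A n) \<alpha>. infdist z (core A) \<le> e) sequentially"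
proof -
  have ct: "continuous_tnorm T" using arch unfolding archimedean_tnorm_def by auto
  have A01: "\<And>x. A x \<in> {0..1}" using fi unfolding fuzzy_interval_def by auto
  obtain a b where core: "core A = {a..b}" "a \<le> b" and one: "\<And>z. z \<in> core A \<longleftrightarrow> A z = 1"
    using fuzzy_interval_core[OF fi] by blast
  have "compact (alpha_cut A \<alpha>)" using fi \<alpha> unfolding fuzzy_interval_def by auto
  then obtain R where R: "\<forall>x\<in>alpha_cut A \<alpha>. \<bar>x\<bar> \<le> R"
    using compact_imp_bounded bounded_real by blast
  have bound: "x \<le> R" if "\<alpha> \<le> A x" for x
    using R that unfolding alpha_cut_def by force
  have bound_refl: "x \<le> R" if "\<alpha> \<le> A (- x)" for x
    using R that unfolding alpha_cut_def by force
  have right_mono: "A x \<le> A y" if "b + e/2 \<le> y" "y \<le> x" for x y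
    using fuzzy_interval_quasiconcave[OF fi, of b y x] that e one[of b] core A01[of x] by auto
  have right_below: "A (b + e/2) < 1" using one[of "b + e/2"] core e A01[of "b + e/2"] by auto
  have "b + e/2 < b + e" using e by simp
  from tnorm_n_right_tail[where A=A and c="b + e/2" and d="b + e",
      OF arch A01 right_mono right_below this \<alpha> bound]
  obtain N1 where N1: "\<forall>n\<ge>N1. \<forall>x. real n * (b + e) \<le> (\<Sum>j<n. x j) \<longrightarrow> tnorm_n T n (\<lambda>j. A (x j)) < \<alpha>"
    by blast
  have left_mono: "A (- x) \<le> A (- y)" if "- a + e/2 \<le> y" "y \<le> x" for x y
    using fuzzy_interval_quasiconcave[OF fi, of "- x" "- y" a] that e one[of a] core A01[of "- x"] by auto
  have left_below: "A (- (- a + e/2)) < 1" using one[of "a - e/2"] core e A01[of "a - e/2"] by auto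
  have "- a + e/2 < - a + e" using e by simp
  from tnorm_n_right_tail[where A="\<lambda>x. A (- x)" and c="- a + e/2" and d="- a + e",
      OF arch A01 left_mono left_below this \<alpha> bound_refl]
  obtain N2 where N2: "\<forall>n\<ge>N2. \<forall>x. real n * (- a + e) \<le> (\<Sum>j<n. x j) \<longrightarrow> tnorm_n T n (\<lambda>j. A (- x j)) < \<alpha>"
    by blast
  have "\<forall>z\<in>alpha_cut (ave_n T A n) \<alpha>. infdist z (core A) \<le> e" if n: "max 1 (max N1 N2) \<le> n" for n
  proof
    fix z assume z: "z \<in> alpha_cut (ave_n T A n) \<alpha>"
    have "1 \<le> n" "N1 \<le> n" "N2 \<le> n" using n by auto
    then obtain x where x: "(\<Sum>j<n. x j) = real n * z" "\<alpha> \<le> tnorm_n T n (\<lambda>j. A (x j))"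
      using alpha_cut_ave_n_witness[OF ct fi \<alpha> _ z] by blast
    have "z \<le> b + e"
    proof (rule ccontr)
      assume "\<not> z \<le> b + e"
      then have "real n * (b + e) \<le> (\<Sum>j<n. x j)" using x(1) by (simp add: mult_left_mono)
      then have "tnorm_n T n (\<lambda>j. A (x j)) < \<alpha>" using N1 \<open>N1 \<le> n\<close> by blast
      then show False using x(2) by simp
    qed
    moreover have "a - e \<le> z"
    proof (rule ccontr)
      assume "\<not> a - e \<le> z"
      then have "real n * (- a + e) \<le> real n * (- z)" by (intro mult_left_mono) auto
      also have "\<dots> = (\<Sum>j<n. - x j)" using x(1) by (simp add: sum_negf)
      finally have "tnorm_n T n (\<lambda>j. A (- (\<lambda>j. - x j) j)) < \<alpha>" using N2 \<open>N2 \<le> n\<close> by blast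
      then show False using x(2) by simp
    qed
    ultimately show "infdist z (core A) \<le> e"
    proof (cases "z \<in> core A")
      case False
      then have "z < a \<or> b < z" using core by auto
      then show ?thesis
        using infdist_le[of a "core A" z] infdist_le[of b "core A" z] core \<open>z \<le> b + e\<close> \<open>a - e \<le> z\<close>
        by (auto simp: dist_real_def)
    qed (use e in simp)
  qed
  then show ?thesis unfolding eventually_sequentially by blast
qed

text \<open>Hausdorff distance to a nonempty subset K of C: since K \<subseteq> C, only the
  excess of C over K counts.\<close>

lemma hausdorff_dist_superset_le:
  assumes "K \<subseteq> C" "K \<noteq> {}" "\<forall>z\<in>C. infdist z K \<le> e"
  shows "0 \<le> hausdorff_dist C K" "hausdorff_dist C K \<le> e"
proof -
  have "(SUP y\<in>K. infdist y C) = (SUP y\<in>K. 0::real)"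
    using assms(1) by (intro SUP_cong) auto
  then have zero: "(SUP y\<in>K. infdist y C) = 0" using assms(2) by simp
  then show "0 \<le> hausdorff_dist C K" unfolding hausdorff_dist_def by simp
  obtain y where "y \<in> K" using assms(2) by blast
  then have "0 \<le> e" using assms(1,3) by force
  moreover have "(SUP z\<in>C. infdist z K) \<le> e"
    using assms by (intro cSUP_least) auto
  ultimately show "hausdorff_dist C K \<le> e" unfolding hausdorff_dist_def zero by simp
qed

lemma tendsto_zero_if_eventually_small:
  fixes f :: "'a \<Rightarrow> real"
  assumes "\<And>e. e > 0 \<Longrightarrow> eventually (\<lambda>n. 0 \<le> f n \<and> f n \<le> e) F"
  shows "(f \<longlongrightarrow> 0) F"
proof (rule order_tendstoI)
  fix r :: real assume "r < 0"
  have "eventually (\<lambda>n. 0 \<le> f n \<and> f n \<le> 1) F" by (rule assms) simp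
  then show "eventually (\<lambda>n. r < f n) F"
    by eventually_elim (use \<open>r < 0\<close> in auto)
next
  fix r :: real assume "0 < r"
  then have "eventually (\<lambda>n. 0 \<le> f n \<and> f n \<le> r/2) F" by (intro assms) simp
  then show "eventually (\<lambda>n. f n < r) F"
    by eventually_elim (use \<open>0 < r\<close> in auto)
qed

text \<open>Since the core lies in every cut of A_n, the Hausdorff distance between
  them is eventually at most e.\<close>

lemma hausdorff_dist_alpha_cut_ave_n_small:
  assumes arch: "archimedean_tnorm T" and fi: "fuzzy_interval A" and \<alpha>: "\<alpha> \<in> {0<..1}" and e: "e > 0"
  shows "eventually (\<lambda>n. 0 \<le> hausdorff_dist (alpha_cut (ave_n T A n) \<alpha>) (core A) \<and>
                          hausdorff_dist (alpha_cut (ave_n T A n) \<alpha>) (core A) \<le> e) sequentially"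
proof -
  have t: "tnorm T" using arch unfolding archimedean_tnorm_def continuous_tnorm_def by auto
  have core: "core A \<noteq> {}" using fuzzy_interval_core_nonempty[OF fi] .
  have "eventually (\<lambda>n. n \<ge> 1) sequentially" by (rule eventually_ge_at_top)
  then show ?thesis using alpha_cut_ave_n_near_core[OF arch fi \<alpha> e]
  proof eventually_elim
    case (elim n)
    then have "core A \<subseteq> alpha_cut (ave_n T A n) \<alpha>"
      using core_subset_alpha_cut_ave_n[OF t fi \<alpha>] by blast
    from hausdorff_dist_superset_le[OF this core] elim(2) show ?case by blast
  qed
qed

theorem mainTheorem9:
  fixes T :: "real \<Rightarrow> real \<Rightarrow> real" and A :: "real \<Rightarrow> real"
  assumes "archimedean_tnorm T"
    and "fuzzy_interval A"
  shows "\<forall>\<alpha>\<in>{0<..1}.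
           (\<forall>n\<ge>1. alpha_cut (ave_n T A n) \<alpha> \<noteq> {} \<and> compact (alpha_cut (ave_n T A n) \<alpha>)) \<and>
           (\<lambda>n. hausdorff_dist (alpha_cut (ave_n T A (Suc n)) \<alpha>) (core A)) \<longlonglongrightarrow> 0"
proof (intro ballI conjI allI impI)
  fix \<alpha> :: real assume \<alpha>: "\<alpha> \<in> {0<..1}"
  have ct: "continuous_tnorm T" using assms(1) unfolding archimedean_tnorm_def by auto
  then have t: "tnorm T" unfolding continuous_tnorm_def by auto
  have core: "core A \<noteq> {}" using fuzzy_interval_core_nonempty[OF assms(2)] .
  fix n :: nat assume n: "n \<ge> 1"
  show "alpha_cut (ave_n T A n) \<alpha> \<noteq> {}"
    using core_subset_alpha_cut_ave_n[OF t assms(2) \<alpha> n] core by blast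
  show "compact (alpha_cut (ave_n T A n) \<alpha>)"
    by (rule compact_alpha_cut_ave_n[OF ct assms(2) \<alpha> n])
next
  fix \<alpha> :: real assume \<alpha>: "\<alpha> \<in> {0<..1}"
  let ?d = "\<lambda>n. hausdorff_dist (alpha_cut (ave_n T A n) \<alpha>) (core A)"
  have "eventually (\<lambda>n. 0 \<le> ?d (Suc n) \<and> ?d (Suc n) \<le> e) sequentially" if "e > 0" for e
    using hausdorff_dist_alpha_cut_ave_n_small[OF assms \<alpha> that]
    unfolding eventually_sequentially by (blast intro: le_SucI)
  then show "(\<lambda>n. ?d (Suc n)) \<longlonglongrightarrow> 0" by (rule tendsto_zero_if_eventually_small)
qed

end
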